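(* Consider a unitary one-parameter channel $\rho_0\mapsto U(\theta)\rho_0U(\theta)^\dagger$ on $\mathbb{C}^d$, with $U(\theta)$ unitary and differentiable in $\theta$, and fixed pure input $\rho_0=|\psi_0\rangle\langle\psi_0|$. Let $H(\theta)$ be the SLD quantum information of $\rho_{out}(\theta)=U(\theta)\rho_0U(\theta)^\dagger$ and $C_\Upsilon(\theta)=4\,\mathrm{tr}\{U'(\theta)\rho_0U'(\theta)^\dagger\}$. Then $H(\theta)=C_\Upsilon(\theta)$ if and only if $\mathrm{tr}\{U(\theta)\rho_0U'(\theta)^\dagger\}=0$.
   Context: A prime denotes $d/d\theta$. The SLD quantum information of a family $\rho(\theta)$ is $H(\theta)=\mathrm{tr}\{\rho\lambda^2\}$ where $\lambda$ is a self-adjoint solution of $\rho'=\frac12(\rho\lambda+\lambda\rho)$. For a unitary channel the canonical Kraus representation consists of the single operator $U(\theta)$, and $C_\Upsilon$ is the Sarovar–Milburn bound $4\sum_k\mathrm{tr}\{\Upsilon_k'\rho_0\Upsilon_k'^\dagger\}$ for it. *)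

theory Defs
  imports "HOL-Analysis.Analysis"
begin

text \<open>Operators on C^d are represented as complex^'n^'n with 'n a finite index type (d = CARD('n)).\<close>

definition mtrace :: "complex^'n^'n \<Rightarrow> complex" where
  "mtrace A = (\<Sum>i\<in>UNIV. A $ i $ i)"

definition adj :: "complex^'n^'n \<Rightarrow> complex^'n^'n" where
  "adj A = (\<chi> i j. cnj (A $ j $ i))"

definition hermitian_mat :: "complex^'n^'n \<Rightarrow> bool" where
  "hermitian_mat A \<longleftrightarrow> adj A = A"

definition unitary_mat :: "complex^'n^'n \<Rightarrow> bool" where
  "unitary_mat U \<longleftrightarrow> adj U ** U = mat 1 \<and> U ** adj U = mat 1"

definition proj :: "complex^'n \<Rightarrow> complex^'n^'n" where
  "proj \<psi> = (\<chi> i j. \<psi> $ i * cnj (\<psi> $ j))"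

definition sld_info :: "complex^'n^'n \<Rightarrow> complex^'n^'n \<Rightarrow> complex" where
  "sld_info \<rho> d\<rho> = (THE h. \<exists>L. hermitian_mat L \<and>
      d\<rho> = (1/2 :: real) *\<^sub>R (\<rho> ** L + L ** \<rho>) \<and>
      h = mtrace (\<rho> ** L ** L))"

end

theory Submission
  imports Defs
begin

text \<open>Write \<open>U' = G U\<close> with \<open>G = U' U\<^sup>\<dagger>\<close>; differentiating \<open>U U\<^sup>\<dagger> = 1\<close> shows that \<open>G\<close> is
  skew-adjoint. The output state is the pure state \<open>\<rho> = |\<phi>\<rangle>\<langle>\<phi>|\<close> with \<open>\<phi> = U \<psi>\<^sub>0\<close>, and its
  derivative is the commutator \<open>D = G \<rho> - \<rho> G\<close>. For an idempotent \<open>\<rho>\<close> and a tangent \<open>D\<close>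
  (\<open>\<rho> D + D \<rho> = D\<close>) every SLD solution \<open>L\<close> satisfies \<open>\<rho> L = 2 \<rho> D\<close> and \<open>L \<rho> = 2 D \<rho>\<close>,
  so \<open>H = 4 tr(\<rho> D\<^sup>2) = 4 (\<langle>G\<rangle>\<^sup>2 - \<langle>G\<^sup>2\<rangle>)\<close> with \<open>\<langle>X\<rangle> = tr(\<rho> X)\<close>. On the other hand
  \<open>C = 4 tr(G \<rho> G\<^sup>\<dagger>) = -4 \<langle>G\<^sup>2\<rangle>\<close> and \<open>tr(U \<rho>\<^sub>0 U'\<^sup>\<dagger>) = -\<langle>G\<rangle>\<close>, so \<open>H = C\<close> iff \<open>\<langle>G\<rangle> = 0\<close>.\<close>

lemma mtrace_eq_trace: "mtrace = trace"
  by (simp add: fun_eq_iff mtrace_def trace_def)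

lemma matrix_add_rdistrib: "(A + B) ** C = A ** C + B ** C"
  by (vector matrix_matrix_mult_def sum.distrib[symmetric] field_simps)

lemma matrix_diff_ldistrib:
  fixes A :: "'a::ring_1^'n^'m"
  shows "A ** (B - C) = A ** B - A ** C"
  by (vector matrix_matrix_mult_def sum_subtractf[symmetric] algebra_simps)

lemma matrix_diff_rdistrib:
  fixes A :: "'a::ring_1^'n^'m"
  shows "(A - B) ** C = A ** C - B ** C"
  by (vector matrix_matrix_mult_def sum_subtractf[symmetric] algebra_simps)

lemma matrix_minus_left:
  fixes A :: "'a::ring_1^'n^'m"
  shows "- A ** B = - (A ** B)"
  by (vector matrix_matrix_mult_def sum_negf[symmetric])

lemma matrix_minus_right:
  fixes A :: "'a::ring_1^'n^'m"
  shows "A ** - B = - (A ** B)"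
  by (vector matrix_matrix_mult_def sum_negf[symmetric])

lemma bounded_bilinear_matrix_mult:
  "bounded_bilinear ((**) :: complex^'n^'n \<Rightarrow> complex^'n^'n \<Rightarrow> complex^'n^'n)"
  by (rule bilinear_conv_bounded_bilinear[THEN iffD1])
     (auto simp: bilinear_def linear_iff matrix_add_ldistrib matrix_add_rdistrib
        scalar_matrix_assoc matrix_scalar_ac)

lemma trace_minus: "trace (- A :: 'a::comm_ring_1^'n^'n) = - trace A"
  by (simp add: trace_def sum_negf)

lemma trace_scaleR: "trace (r *\<^sub>R A :: complex^'n^'n) = of_real r * trace A"
  unfolding trace_def by (simp add: sum_distrib_left) (simp add: scaleR_conv_of_real)

lemma trace_similar:
  fixes A :: "'a::comm_semiring_1^'n^'n"
  assumes "B ** A = mat 1"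
  shows "trace (A ** M ** B) = trace M"
  by (metis assms trace_mul_sym matrix_mul_assoc matrix_mul_lid)

lemma adj_adj [simp]: "adj (adj A) = A"
  by (simp add: adj_def vec_eq_iff)

lemma adj_matrix_mult: "adj (A ** B) = adj B ** adj A"
  by (simp add: adj_def matrix_matrix_mult_def vec_eq_iff mult.commute)

lemma adj_minus [simp]: "adj (- A) = - adj A"
  by (simp add: adj_def vec_eq_iff)

lemma adj_diff [simp]: "adj (A - B) = adj A - adj B"
  by (simp add: adj_def vec_eq_iff)

lemma bounded_linear_adj: "bounded_linear (adj :: complex^'n^'n \<Rightarrow> complex^'n^'n)"
  by (rule linear_conv_bounded_linear[THEN iffD1]) (auto simp: linear_iff adj_def vec_eq_iff)

lemma adj_proj [simp]: "adj (proj \<psi>) = proj \<psi>"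
  by (simp add: adj_def proj_def vec_eq_iff)

lemma proj_matrix_vector_mult: "proj (A *v \<psi>) = A ** proj \<psi> ** adj A"
  by (simp add: proj_def adj_def matrix_matrix_mult_def matrix_vector_mult_def vec_eq_iff
      sum_distrib_left sum_distrib_right mult_ac)

lemma trace_proj: "trace (proj \<psi>) = of_real ((norm \<psi>)\<^sup>2)"
proof -
  have "trace (proj \<psi>) = (\<Sum>i\<in>UNIV. of_real ((cmod (\<psi> $ i))\<^sup>2))"
    by (simp add: trace_def proj_def complex_norm_square del: of_real_power)
  then show ?thesis
    by (simp add: norm_vec_def L2_set_def sum_nonneg del: of_real_power flip: of_real_sum)
qed

lemma norm_matrix_vector_mult_isometry:
  assumes "adj V ** V = mat 1"
  shows "norm (V *v \<psi>) = norm \<psi>"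
proof -
  have "trace (proj (V *v \<psi>)) = trace (proj \<psi>)"
    by (simp add: proj_matrix_vector_mult trace_similar assms)
  then show ?thesis
    by (metis trace_proj norm_ge_zero of_real_eq_iff power2_eq_iff_nonneg)
qed

lemma proj_idempotent:
  assumes "norm \<psi> = 1"
  shows "proj \<psi> ** proj \<psi> = proj \<psi>"
proof -
  have "(\<Sum>k\<in>UNIV. \<psi> $ k * cnj (\<psi> $ k)) = 1"
    using trace_proj[of \<psi>] assms by (simp add: trace_def proj_def)
  moreover have "(\<Sum>k\<in>UNIV. \<psi> $ i * cnj (\<psi> $ k) * (\<psi> $ k * cnj (\<psi> $ j)))
      = \<psi> $ i * cnj (\<psi> $ j) * (\<Sum>k\<in>UNIV. \<psi> $ k * cnj (\<psi> $ k))" for i j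
    by (simp add: sum_distrib_left mult_ac)
  ultimately show ?thesis
    by (simp add: proj_def matrix_matrix_mult_def vec_eq_iff)
qed

lemma proj_sandwich_nth:
  "(proj \<psi> ** A ** proj \<psi>) $ i $ j = trace (proj \<psi> ** A) * proj \<psi> $ i $ j"
  by (simp add: trace_def proj_def matrix_matrix_mult_def sum_distrib_left sum_distrib_right mult_ac)

lemma trace_proj_sandwich:
  "trace (proj \<psi> ** A ** proj \<psi> ** B) = trace (proj \<psi> ** A) * trace (proj \<psi> ** B)"
  by (simp add: trace_def matrix_matrix_mult_def[of "proj \<psi> ** A ** proj \<psi>"] proj_sandwich_nth
      sum_distrib_left mult.assoc) (simp add: matrix_matrix_mult_def sum_distrib_left)

lemma idempotent_sandwich_anticommutator:
  fixes \<rho> :: "'a::semiring_1^'n^'n"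
  assumes "\<rho> ** \<rho> = \<rho>" and "\<rho> ** X + X ** \<rho> = Y"
  shows "\<rho> ** X ** \<rho> + \<rho> ** X ** \<rho> = \<rho> ** Y ** \<rho>"
  by (metis assms matrix_add_ldistrib matrix_add_rdistrib matrix_mul_assoc)

lemma sld_info_idempotent:
  fixes \<rho> D :: "complex^'n^'n"
  assumes idem: "\<rho> ** \<rho> = \<rho>" and herm: "hermitian_mat D"
    and tangent: "\<rho> ** D + D ** \<rho> = D"
  shows "sld_info \<rho> D = 4 * trace (\<rho> ** D ** D)"
  unfolding sld_info_def mtrace_eq_trace
proof (rule the_equality)
  show "\<exists>L. hermitian_mat L \<and> D = (1/2::real) *\<^sub>R (\<rho> ** L + L ** \<rho>) \<and>
      4 * trace (\<rho> ** D ** D) = trace (\<rho> ** L ** L)"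
  proof (intro exI conjI)
    show "hermitian_mat ((2::real) *\<^sub>R D)"
      using herm by (simp add: hermitian_mat_def adj_def vec_eq_iff)
    show "D = (1/2::real) *\<^sub>R (\<rho> ** ((2::real) *\<^sub>R D) + ((2::real) *\<^sub>R D) ** \<rho>)"
      using tangent by (simp add: matrix_scalar_ac flip: scalar_matrix_assoc scaleR_right_distrib)
    show "4 * trace (\<rho> ** D ** D) = trace (\<rho> ** ((2::real) *\<^sub>R D) ** ((2::real) *\<^sub>R D))"
      by (simp add: matrix_scalar_ac trace_scaleR flip: scalar_matrix_assoc)
  qed
next
  fix h
  assume "\<exists>L. hermitian_mat L \<and> D = (1/2::real) *\<^sub>R (\<rho> ** L + L ** \<rho>) \<and> h = trace (\<rho> ** L ** L)"
  then obtain L where L: "\<rho> ** L + L ** \<rho> = (2::real) *\<^sub>R D" and h: "h = trace (\<rho> ** L ** L)"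
    by auto
  have "\<rho> ** D ** \<rho> = 0"
    using idempotent_sandwich_anticommutator[OF idem tangent] by simp
  then have "\<rho> ** L ** \<rho> = 0"
    using idempotent_sandwich_anticommutator[OF idem L]
    by (simp add: matrix_scalar_ac vec_eq_iff flip: scalar_matrix_assoc)
  then have "\<rho> ** (\<rho> ** L + L ** \<rho>) = \<rho> ** L" and "(\<rho> ** L + L ** \<rho>) ** \<rho> = L ** \<rho>"
    by (simp_all add: matrix_add_ldistrib matrix_add_rdistrib matrix_mul_assoc idem)
      (metis idem matrix_mul_assoc)
  then have left: "\<rho> ** L = (2::real) *\<^sub>R (\<rho> ** D)" and right: "L ** \<rho> = (2::real) *\<^sub>R (D ** \<rho>)"
    by (simp_all add: L matrix_scalar_ac flip: scalar_matrix_assoc)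
  have "h = trace ((\<rho> ** L) ** (L ** \<rho>))"
    by (metis h idem trace_mul_sym matrix_mul_assoc)
  also have "\<dots> = 4 * trace ((\<rho> ** D) ** (D ** \<rho>))"
    by (simp add: left right matrix_scalar_ac trace_scaleR flip: scalar_matrix_assoc)
  also have "\<dots> = 4 * trace (\<rho> ** D ** D)"
    by (metis idem trace_mul_sym matrix_mul_assoc)
  finally show "h = 4 * trace (\<rho> ** D ** D)" .
qed

lemma sld_info_proj_commutator:
  fixes G :: "complex^'n^'n"
  assumes "norm \<phi> = 1" and skew: "adj G = - G"
  shows "sld_info (proj \<phi>) (G ** proj \<phi> - proj \<phi> ** G)
    = 4 * ((trace (proj \<phi> ** G))\<^sup>2 - trace (proj \<phi> ** G ** G))"
proof -
  define \<rho> where "\<rho> = proj \<phi>"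
  have idem: "\<rho> ** \<rho> = \<rho>"
    using proj_idempotent[OF assms(1)] by (simp add: \<rho>_def)
  have idem_right: "X ** \<rho> ** \<rho> = X ** \<rho>" for X
    by (metis idem matrix_mul_assoc)
  have "sld_info \<rho> (G ** \<rho> - \<rho> ** G) = 4 * trace (\<rho> ** (G ** \<rho> - \<rho> ** G) ** (G ** \<rho> - \<rho> ** G))"
  proof (rule sld_info_idempotent[OF idem])
    show "hermitian_mat (G ** \<rho> - \<rho> ** G)"
      by (simp add: hermitian_mat_def adj_matrix_mult skew \<rho>_def matrix_minus_left matrix_minus_right)
    show "\<rho> ** (G ** \<rho> - \<rho> ** G) + (G ** \<rho> - \<rho> ** G) ** \<rho> = G ** \<rho> - \<rho> ** G"
      by (simp add: matrix_diff_ldistrib matrix_diff_rdistrib matrix_mul_assoc idem idem_right)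
  qed
  also have "trace (\<rho> ** (G ** \<rho> - \<rho> ** G) ** (G ** \<rho> - \<rho> ** G))
      = trace (\<rho> ** G ** \<rho> ** G ** \<rho>) - trace (\<rho> ** G ** G ** \<rho>)"
    by (simp add: matrix_diff_ldistrib matrix_diff_rdistrib matrix_mul_assoc idem idem_right trace_sub)
  also have "\<dots> = (trace (\<rho> ** G))\<^sup>2 - trace (\<rho> ** G ** G)"
    by (metis idem matrix_mul_assoc trace_mul_sym trace_proj_sandwich power2_eq_square \<rho>_def)
  finally show ?thesis
    by (simp add: \<rho>_def)
qed

lemma has_vector_derivative_sandwich:
  fixes U :: "real \<Rightarrow> complex^'n^'n"
  assumes "(U has_vector_derivative W) (at t)"
  shows "((\<lambda>s. U s ** A ** adj (U s))
    has_vector_derivative W ** A ** adj (U t) + U t ** A ** adj W) (at t)"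
proof -
  have "((\<lambda>s. U s ** A) has_vector_derivative W ** A) (at t)"
    using bounded_linear.has_vector_derivative[OF
        bounded_bilinear.bounded_linear_left[OF bounded_bilinear_matrix_mult] assms] .
  moreover have "((\<lambda>s. adj (U s)) has_vector_derivative adj W) (at t)"
    using bounded_linear.has_vector_derivative[OF bounded_linear_adj assms] .
  ultimately show ?thesis
    using bounded_bilinear.has_vector_derivative[OF bounded_bilinear_matrix_mult]
    by (simp add: add.commute)
qed

lemma unitary_curve_generator_skew:
  fixes U :: "real \<Rightarrow> complex^'n^'n"
  assumes "\<And>s. U s ** adj (U s) = mat 1" and "(U has_vector_derivative W) (at t)"
  shows "adj (W ** adj (U t)) = - (W ** adj (U t))"
proof -
  have "((\<lambda>s. U s ** mat 1 ** adj (U s)) has_vector_derivative W ** adj (U t) + U t ** adj W) (at t)"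
    using has_vector_derivative_sandwich[OF assms(2), of "mat 1"] by simp
  moreover have "((\<lambda>s. U s ** mat 1 ** adj (U s)) has_vector_derivative 0) (at t)"
    using assms(1) by simp
  ultimately have "W ** adj (U t) + U t ** adj W = 0"
    using vector_derivative_unique_at by blast
  then show ?thesis
    by (simp add: adj_matrix_mult eq_neg_iff_add_eq_0 add.commute)
qed

theorem lemma4:
  fixes U :: "real \<Rightarrow> complex^'n^'n" and \<psi>0 :: "complex^'n" and \<theta> :: real
  assumes unitary: "\<And>t. unitary_mat (U t)"
    and diff: "\<And>t. U differentiable (at t)"
    and unit: "norm \<psi>0 = 1"
  defines "\<rho>out \<equiv> (\<lambda>t. U t ** proj \<psi>0 ** adj (U t))"
    and "U' \<equiv> vector_derivative U (at \<theta>)"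
  shows "sld_info (\<rho>out \<theta>) (vector_derivative \<rho>out (at \<theta>))
           = 4 * mtrace (U' ** proj \<psi>0 ** adj U')
         \<longleftrightarrow> mtrace (U \<theta> ** proj \<psi>0 ** adj U') = 0"
proof -
  define V P G \<phi> where "V = U \<theta>" and "P = proj \<psi>0" and "G = U' ** adj V" and "\<phi> = V *v \<psi>0"
  have dU: "(U has_vector_derivative U') (at \<theta>)"
    using diff by (simp add: U'_def vector_derivative_works)
  have VV: "adj V ** V = mat 1" "V ** adj V = mat 1"
    using unitary by (auto simp: V_def unitary_mat_def)
  have skew: "adj G = - G"
    unfolding G_def V_def using unitary dU
    by (intro unitary_curve_generator_skew) (auto simp: unitary_mat_def)
  have U': "U' = G ** V"
    by (simp add: G_def VV flip: matrix_mul_assoc)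
  then have adj_U': "adj U' = - (adj V ** G)"
    by (simp add: adj_matrix_mult skew matrix_minus_right)
  have \<rho>: "V ** P ** adj V = proj \<phi>"
    by (simp add: \<phi>_def P_def proj_matrix_vector_mult)
  have "norm \<phi> = 1"
    using unit VV by (simp add: \<phi>_def norm_matrix_vector_mult_isometry)
  have "vector_derivative \<rho>out (at \<theta>) = U' ** P ** adj V + V ** P ** adj U'"
    using vector_derivative_at[OF has_vector_derivative_sandwich[OF dU]]
    by (simp add: \<rho>out_def V_def P_def)
  also have "\<dots> = G ** proj \<phi> - proj \<phi> ** G"
    unfolding adj_U' by (simp add: U' matrix_minus_right matrix_mul_assoc flip: \<rho>)
  finally have H: "sld_info (\<rho>out \<theta>) (vector_derivative \<rho>out (at \<theta>))
      = 4 * ((trace (proj \<phi> ** G))\<^sup>2 - trace (proj \<phi> ** G ** G))"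
    using sld_info_proj_commutator[OF \<open>norm \<phi> = 1\<close> skew] \<rho> by (simp add: \<rho>out_def V_def P_def)
  have C: "mtrace (U' ** P ** adj U') = - trace (proj \<phi> ** G ** G)"
    unfolding adj_U'
    by (simp add: U' mtrace_eq_trace matrix_minus_right trace_minus matrix_mul_assoc flip: \<rho>)
      (metis trace_mul_sym matrix_mul_assoc)
  have cross: "mtrace (V ** P ** adj U') = - trace (proj \<phi> ** G)"
    by (simp add: adj_U' mtrace_eq_trace matrix_minus_right trace_minus matrix_mul_assoc flip: \<rho>)
  show ?thesis
    using H C cross by (simp add: V_def P_def)
qed

end
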